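(* Let $S_j$ be local potentials satisfying (A)–(E), and let $(p_1,q_1),\dots,(p_d,q_d)\in\mathbb{Z}^d\times\mathbb{Z}$ with $p_1,\dots,p_d$ linearly independent. Then every minimizer $x$ of $W_{p,q}$ on $\mathbb{X}_{p,q}$ is a global minimizer.
   Context: Notation: $\|i\|=\sum_{k=1}^d|i_k|$, $B_j^r=\{k:\|k-j\|\le r\}$, $(\tau_{k,l}x)_i=x_{i+k}+l$. Local potentials $S_j:\mathbb{R}^{\mathbb{Z}^d}\to\mathbb{R}$, $j\in\mathbb{Z}^d$, satisfy: (A) there is $r\in(0,\infty)$ and $C^2$ functions $s_j:\mathbb{R}^{B_j^r}\to\mathbb{R}$ with $S_j(x)=s_j(x|_{B_j^r})$; (B) $S_j(\tau_{k,l}x)=S_{j+k}(x)$; (C) each $S_j$ is bounded below and $S_j(x)\to\infty$ as $|x_k-x_j|\to\infty$ whenever $\|k-j\|=1$; (D) $\partial_{i,k}S_j\le0$ for $i\ne k$, and $\partial_{i,k}S_i<0$ when $\|i-k\|=1$; (E) $|\partial_{i,k}S_j|\le C$ uniformly. With $p$ the matrix with columns $p_j$: $B_p=p([0,1)^d)\cap\mathbb{Z}^d$, $\mathbb{X}_{p,q}=\{x:\tau_{p_j,q_j}x=x\ \forall j\}$, $W_{p,q}(x)=\sum_{j\in B_p}S_j(x)$. For finite $B\subset\mathbb{Z}^d$: $W_B(x)=\sum_{j\in B}S_j(x)$ and $\mathring{B}^{(r)}=\{i\in B:B_i^r\subset B\}$. A configuration $x$ is a global minimizer if $W_B(x+y)\ge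 W_B(x)$ for every finite $B\subset\mathbb{Z}^d$ and every $y\in\mathbb{R}^{\mathbb{Z}^d}$ with support in $\mathring{B}^{(r)}$. *)

theory Defs
  imports "HOL-Analysis.Analysis"
begin

type_synonym 'd config = "int ^ 'd \<Rightarrow> real"

definition norm1 :: "int ^ 'd::finite \<Rightarrow> int" where
  "norm1 i = (\<Sum>k\<in>UNIV. \<bar>i $ k\<bar>)"

definition ballZ :: "int ^ 'd::finite \<Rightarrow> real \<Rightarrow> (int ^ 'd) set" where
  "ballZ j r = {k. real_of_int (norm1 (k - j)) \<le> r}"

definition tau :: "int ^ 'd::finite \<Rightarrow> int \<Rightarrow> 'd config \<Rightarrow> 'd config" where
  "tau k l x = (\<lambda>i. x (i + k) + real_of_int l)"

definition pderiv_at :: "int ^ 'd::finite \<Rightarrow> ('d config \<Rightarrow> real) \<Rightarrow> 'd config \<Rightarrow> real" where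
  "pderiv_at i f x = deriv (\<lambda>t. f (x(i := t))) (x i)"

definition C2_fun :: "('d::finite config \<Rightarrow> real) \<Rightarrow> bool" where
  "C2_fun f \<longleftrightarrow>
     (\<forall>x i. (\<lambda>t. f (x(i := t))) differentiable (at (x i))) \<and>
     (\<forall>x i k. (\<lambda>t. pderiv_at k f (x(i := t))) differentiable (at (x i))) \<and>
     (\<forall>i. continuous_on UNIV (pderiv_at i f)) \<and>
     (\<forall>i k. continuous_on UNIV (pderiv_at i (pderiv_at k f)))"

definition local_potentials ::
  "(int ^ 'd::finite \<Rightarrow> 'd config \<Rightarrow> real) \<Rightarrow> real \<Rightarrow> bool" where
  "local_potentials S r \<longleftrightarrow>
     \<comment> \<open>(A)\<close>
     0 < r \<and>
     (\<forall>j x y. (\<forall>k\<in>ballZ j r. x k = y k) \<longrightarrow> S j x = S j y) \<and>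
     (\<forall>j. C2_fun (S j)) \<and>
     \<comment> \<open>(B)\<close>
     (\<forall>j k l x. S j (tau k l x) = S (j + k) x) \<and>
     \<comment> \<open>(C)\<close>
     (\<forall>j. \<exists>m. \<forall>x. m \<le> S j x) \<and>
     (\<forall>j k. norm1 (k - j) = 1 \<longrightarrow>
        (\<forall>M. \<exists>R. \<forall>x. R < \<bar>x k - x j\<bar> \<longrightarrow> M < S j x)) \<and>
     \<comment> \<open>(D)\<close>
     (\<forall>i k j x. i \<noteq> k \<longrightarrow> pderiv_at i (pderiv_at k (S j)) x \<le> 0) \<and>
     (\<forall>i k x. norm1 (i - k) = 1 \<longrightarrow> pderiv_at i (pderiv_at k (S i)) x < 0) \<and>
     \<comment> \<open>(E)\<close>
     (\<exists>C. \<forall>i k j x. \<bar>pderiv_at i (pderiv_at k (S j)) x\<bar> \<le> C)"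

definition real_vec :: "int ^ 'd::finite \<Rightarrow> real ^ 'd" where
  "real_vec v = (\<chi> k. real_of_int (v $ k))"

definition lin_indep_family :: "('d::finite \<Rightarrow> int ^ 'd) \<Rightarrow> bool" where
  "lin_indep_family p \<longleftrightarrow>
     (\<forall>c :: 'd \<Rightarrow> real. (\<Sum>j\<in>UNIV. c j *\<^sub>R real_vec (p j)) = 0 \<longrightarrow> (\<forall>j. c j = 0))"

definition Bp :: "('d::finite \<Rightarrow> int ^ 'd) \<Rightarrow> (int ^ 'd) set" where
  "Bp p = {i. \<exists>t :: 'd \<Rightarrow> real. (\<forall>j. 0 \<le> t j \<and> t j < 1) \<and>
              real_vec i = (\<Sum>j\<in>UNIV. t j *\<^sub>R real_vec (p j))}"

definition Xpq :: "('d::finite \<Rightarrow> int ^ 'd) \<Rightarrow> ('d \<Rightarrow> int) \<Rightarrow> 'd config set" where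
  "Xpq p q = {x. \<forall>j. tau (p j) (q j) x = x}"

definition WB :: "(int ^ 'd::finite \<Rightarrow> 'd config \<Rightarrow> real) \<Rightarrow> (int ^ 'd) set \<Rightarrow> 'd config \<Rightarrow> real" where
  "WB S B x = (\<Sum>j\<in>B. S j x)"

definition Wpq :: "(int ^ 'd \<Rightarrow> 'd config \<Rightarrow> real) \<Rightarrow> ('d::finite \<Rightarrow> int ^ 'd) \<Rightarrow> 'd config \<Rightarrow> real" where
  "Wpq S p x = WB S (Bp p) x"

definition interiorB :: "(int ^ 'd::finite) set \<Rightarrow> real \<Rightarrow> (int ^ 'd) set" where
  "interiorB B r = {i \<in> B. ballZ i r \<subseteq> B}"

definition global_minimizer ::
  "(int ^ 'd::finite \<Rightarrow> 'd config \<Rightarrow> real) \<Rightarrow> real \<Rightarrow> 'd config \<Rightarrow> bool" where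
  "global_minimizer S r x \<longleftrightarrow>
     (\<forall>B y. finite B \<longrightarrow> (\<forall>i. y i \<noteq> 0 \<longrightarrow> i \<in> interiorB B r) \<longrightarrow>
        WB S B x \<le> WB S B (\<lambda>i. x i + y i))"

end

theory Submission
  imports Defs
begin

text \<open>
  The proof has three ingredients.
  (1) Submodularity: hypothesis (D) makes every local potential, hence every \<open>W\<^sub>B\<close>,
      submodular for the pointwise minimum and maximum of configurations.
  (2) Doubling: if \<open>x\<close> minimizes \<open>W\<^sub>p\<^sub>,\<^sub>q\<close>, it still minimizes the energy obtained after
      doubling one period \<open>(p\<^sub>m, q\<^sub>m)\<close>: for a competitor \<open>z\<close> with the doubled periods, the
      minimum and maximum of \<open>z\<close> and its translate by \<open>(p\<^sub>m, q\<^sub>m)\<close> are \<open>(p, q)\<close>-periodic and,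
      by submodularity, bound the energy of \<open>z\<close>.  Iterating, \<open>x\<close> minimizes the energy for
      the periods \<open>2\<^sup>n p\<close> for every \<open>n\<close>.
  (3) Periodic extension: a perturbation \<open>y\<close> supported in the \<open>r\<close>-interior of a finite set
      \<open>B\<close> can be placed inside a translate of the fundamental domain of \<open>2\<^sup>n p\<close>; its
      periodic extension is an admissible competitor whose energy difference is exactly
      \<open>W\<^sub>B(x + y) - W\<^sub>B(x)\<close>.
\<close>

lemma has_real_derivative_pderiv:
  assumes "C2_fun f"
  shows "((\<lambda>t. f (y(i := t))) has_real_derivative pderiv_at i f (y(i := s))) (at s)"
proof -
  have "(\<lambda>t. f ((y(i := s))(i := t))) differentiable (at ((y(i := s)) i))"
    using assms unfolding C2_fun_def by blast
  then show ?thesis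
    by (simp add: pderiv_at_def DERIV_deriv_iff_real_differentiable)
qed

lemma has_real_derivative_pderiv2:
  assumes "C2_fun f"
  shows "((\<lambda>t. pderiv_at k f (y(i := t))) has_real_derivative
            pderiv_at i (pderiv_at k f) (y(i := s))) (at s)"
proof -
  have "(\<lambda>t. pderiv_at k f ((y(i := s))(i := t))) differentiable (at ((y(i := s)) i))"
    using assms unfolding C2_fun_def by blast
  then show ?thesis
    by (simp add: pderiv_at_def DERIV_deriv_iff_real_differentiable)
qed

lemma C2_cross_difference_antitone:
  assumes C: "C2_fun f"
    and mixed: "\<And>x. pderiv_at k (pderiv_at i f) x \<le> 0"
    and ik: "i \<noteq> k" and "a \<le> a'" and "b \<le> b'"
  shows "f (x(i := a', k := b')) - f (x(i := a', k := b)) \<le> f (x(i := a, k := b')) - f (x(i := a, k := b))"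
proof -
  define \<phi> where "\<phi> u = f (x(i := u, k := b')) - f (x(i := u, k := b))" for u
  have upd: "(x(k := c))(i := t) = x(i := t, k := c)" for t c
    using ik by (simp add: fun_upd_twist)
  have pderiv_antitone: "pderiv_at i f (x(i := u, k := b')) \<le> pderiv_at i f (x(i := u, k := b))" for u
  proof -
    have "((\<lambda>t. pderiv_at i f (x(i := u, k := t))) has_real_derivative
            pderiv_at k (pderiv_at i f) ((x(i := u))(k := w))) (at w)" for w
      using has_real_derivative_pderiv2[OF C, of i "x(i := u)" k] by simp
    then show ?thesis
      using DERIV_nonpos_imp_nonincreasing[OF \<open>b \<le> b'\<close>] mixed by blast
  qed
  have "(\<phi> has_real_derivative pderiv_at i f (x(i := u, k := b')) - pderiv_at i f (x(i := u, k := b))) (at u)" for u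
    using DERIV_diff[OF has_real_derivative_pderiv[OF C, of "x(k := b')" i]
                        has_real_derivative_pderiv[OF C, of "x(k := b)" i]]
    unfolding \<phi>_def by (simp add: upd)
  then have "\<phi> a' \<le> \<phi> a"
    using DERIV_nonpos_imp_nonincreasing[OF \<open>a \<le> a'\<close>] pderiv_antitone
    by (metis diff_le_0_iff_le)
  then show ?thesis unfolding \<phi>_def .
qed

text \<open>The discrete form of a nonpositive mixed second derivative (for every pair of
  distinct coordinates); this is all that is used about the second derivatives.\<close>
definition antitone_cross_diffs :: "(('a \<Rightarrow> real) \<Rightarrow> real) \<Rightarrow> bool" where
  "antitone_cross_diffs f \<longleftrightarrow> (\<forall>x i k a a' b b'. i \<noteq> k \<longrightarrow> a \<le> a' \<longrightarrow> b \<le> b' \<longrightarrow>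
     f (x(i := a', k := b')) - f (x(i := a', k := b)) \<le> f (x(i := a, k := b')) - f (x(i := a, k := b)))"

lemma antitone_cross_diffs_increment:
  assumes f: "antitone_cross_diffs f" and "finite E"
    and "\<And>i. c i \<le> a i" and "\<And>i. i \<notin> E \<Longrightarrow> c i = a i" and "e \<notin> E" and "a e \<le> w"
  shows "f (a(e := w)) - f a \<le> f (c(e := w)) - f c"
  using assms(2-)
proof (induction E arbitrary: c rule: finite_induct)
  case empty
  then have "c = a" by (simp add: fun_eq_iff)
  then show ?case by simp
next
  case (insert g E)
  define m where "m = c(g := a g)"
  have "f (a(e := w)) - f a \<le> f (m(e := w)) - f m"
    using insert.prems by (intro insert.IH) (auto simp: m_def)
  also have "\<dots> \<le> f (c(e := w)) - f c"
  proof -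
    have ge: "g \<noteq> e" and "c e = a e" using insert.prems by auto
    then have "f (c(g := a g, e := w)) - f (c(g := a g, e := c e))
              \<le> f (c(g := c g, e := w)) - f (c(g := c g, e := c e))"
      using f insert.prems unfolding antitone_cross_diffs_def by metis
    moreover have "c(g := a g, e := c e) = m" "c(g := a g, e := w) = m(e := w)"
      using ge by (auto simp: m_def fun_eq_iff)
    ultimately show ?thesis by simp
  qed
  finally show ?case .
qed

lemma antitone_cross_diffs_submodular:
  assumes f: "antitone_cross_diffs f" and "finite E" and "\<And>i. i \<notin> E \<Longrightarrow> a i = b i"
  shows "f (inf a b) + f (sup a b) \<le> f a + f b"
  using assms(2-)
proof (induction E arbitrary: a b rule: finite_induct)
  case empty
  then have "a = b" by (simp add: fun_eq_iff)
  then show ?case by simp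
next
  case (insert e E)
  have ordered: "f (inf a b) + f (sup a b) \<le> f a + f b"
    if ab: "\<And>i. i \<notin> insert e E \<Longrightarrow> a i = b i" and le: "a e \<le> b e" for a b
  proof -
    define a' where "a' = a(e := b e)"
    have "f (inf a' b) + f (sup a' b) \<le> f a' + f b"
      using ab by (intro insert.IH) (auto simp: a'_def)
    moreover have "inf a' b = (inf a b)(e := b e)" "sup a' b = sup a b"
      using le by (auto simp: a'_def fun_eq_iff sup_max max_def)
    moreover have "a i \<le> b i" if "i \<notin> E" for i
      using ab le that by (cases "i = e") auto
    then have "f (a(e := b e)) - f a \<le> f ((inf a b)(e := b e)) - f (inf a b)"
      using ab le insert.hyps
      by (intro antitone_cross_diffs_increment[OF f, of E]) (auto simp: inf_min min_def)
    ultimately show ?thesis by (simp add: a'_def)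
  qed
  show ?case
  proof (cases "a e \<le> b e")
    case True
    then show ?thesis using ordered insert.prems by blast
  next
    case False
    then have "f (inf b a) + f (sup b a) \<le> f b + f a"
      using ordered[of b a] insert.prems by force
    then show ?thesis by (metis inf_commute sup_commute add.commute)
  qed
qed

lemma finite_int_box: "finite {v :: int ^ 'd::finite. \<forall>k. \<bar>v $ k\<bar> \<le> C}"
proof -
  have "{v :: int ^ 'd. \<forall>k. \<bar>v $ k\<bar> \<le> C} \<subseteq> vec_lambda ` (PiE UNIV (\<lambda>_. {-C..C}))"
  proof
    fix v :: "int ^ 'd"
    assume "v \<in> {v. \<forall>k. \<bar>v $ k\<bar> \<le> C}"
    then have "(\<lambda>k. v $ k) \<in> PiE UNIV (\<lambda>_. {-C..C})" by (auto simp: abs_le_iff minus_le_iff)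
    then show "v \<in> vec_lambda ` (PiE UNIV (\<lambda>_. {-C..C}))" by (metis image_eqI vec_lambda_eta)
  qed
  moreover have "finite (PiE (UNIV :: 'd set) (\<lambda>_. {-C..C}))" by (rule finite_PiE) auto
  ultimately show ?thesis using finite_subset by blast
qed

lemma norm1_component_le: "\<bar>v $ m\<bar> \<le> norm1 v"
  unfolding norm1_def by (rule member_le_sum) auto

lemma norm1_minus_commute: "norm1 (a - b) = norm1 (b - a)"
  unfolding norm1_def by (rule sum.cong) (auto simp: abs_minus_commute)

lemma finite_ballZ: "finite (ballZ j r)"
proof -
  have "ballZ j r \<subseteq> {v. \<forall>k. \<bar>v $ k\<bar> \<le> \<lceil>r\<rceil> + norm1 j}"
  proof safe
    fix v k
    assume "v \<in> ballZ j r"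
    then have "norm1 (v - j) \<le> \<lceil>r\<rceil>" by (simp add: ballZ_def) linarith
    moreover have "\<bar>(v - j) $ k\<bar> \<le> norm1 (v - j)" "\<bar>j $ k\<bar> \<le> norm1 j"
      by (rule norm1_component_le)+
    ultimately show "\<bar>v $ k\<bar> \<le> \<lceil>r\<rceil> + norm1 j" by auto
  qed
  then show ?thesis using finite_int_box finite_subset by blast
qed

lemma local_potentials_local:
  assumes "local_potentials S r" and "\<And>k. k \<in> ballZ j r \<Longrightarrow> x k = y k"
  shows "S j x = S j y"
  using assms unfolding local_potentials_def by metis

lemma local_potentials_shift:
  assumes "local_potentials S r"
  shows "S j (tau k l x) = S (j + k) x"
  using assms unfolding local_potentials_def by simp

lemma local_potentials_antitone_cross_diffs:
  assumes LP: "local_potentials S r"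
  shows "antitone_cross_diffs (S j)"
  unfolding antitone_cross_diffs_def
proof (intro allI impI)
  fix x i k a a' b b'
  assume "(i :: int ^ 'a) \<noteq> k" "(a :: real) \<le> a'" "(b :: real) \<le> b'"
  moreover have "C2_fun (S j)" and "\<And>x. pderiv_at k (pderiv_at i (S j)) x \<le> 0"
    using LP \<open>i \<noteq> k\<close> unfolding local_potentials_def by metis+
  ultimately show "S j (x(i := a', k := b')) - S j (x(i := a', k := b))
                   \<le> S j (x(i := a, k := b')) - S j (x(i := a, k := b))"
    using C2_cross_difference_antitone by blast
qed

lemma local_potentials_submodular:
  assumes LP: "local_potentials S r"
  shows "S j (inf a b) + S j (sup a b) \<le> S j a + S j b"
proof -
  define a' where "a' = (\<lambda>i. if i \<in> ballZ j r then a i else b i)"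
  have "S j (inf a' b) + S j (sup a' b) \<le> S j a' + S j b"
    by (rule antitone_cross_diffs_submodular[OF local_potentials_antitone_cross_diffs[OF LP]
          finite_ballZ[of j r]]) (simp add: a'_def)
  moreover have "S j a' = S j a" "S j (inf a' b) = S j (inf a b)" "S j (sup a' b) = S j (sup a b)"
    by (rule local_potentials_local[OF LP], simp add: a'_def)+
  ultimately show ?thesis by simp
qed

lemma WB_submodular:
  assumes "local_potentials S r"
  shows "WB S B (inf a b) + WB S B (sup a b) \<le> WB S B a + WB S B b"
  unfolding WB_def sum.distrib[symmetric]
  by (rule sum_mono) (rule local_potentials_submodular[OF assms])

lemma real_vec_add: "real_vec (a + b) = real_vec a + real_vec b"
  and real_vec_diff: "real_vec (a - b) = real_vec a - real_vec b"
  and real_vec_smult: "real_vec (c *s v) = real_of_int c *\<^sub>R real_vec v"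
  and real_vec_zero: "real_vec 0 = 0"
  by (simp_all add: real_vec_def vec_eq_iff)

lemma real_vec_sum: "real_vec (sum f A) = (\<Sum>x\<in>A. real_vec (f x))"
  by (induction A rule: infinite_finite_induct) (auto simp: real_vec_add real_vec_zero)

lemma lin_indep_familyD:
  "lin_indep_family p \<Longrightarrow> (\<Sum>j\<in>UNIV. c j *\<^sub>R real_vec (p j)) = 0 \<Longrightarrow> c j = 0"
  unfolding lin_indep_family_def by blast

lemma Bp_memI:
  "(\<And>j. 0 \<le> t j \<and> t j < 1) \<Longrightarrow> real_vec i = (\<Sum>j\<in>UNIV. t j *\<^sub>R real_vec (p j)) \<Longrightarrow> i \<in> Bp p"
  unfolding Bp_def by blast

lemma lin_indep_coeffs_unique:
  assumes "lin_indep_family p"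
    and "(\<Sum>j\<in>UNIV. c j *\<^sub>R real_vec (p j)) = (\<Sum>j\<in>UNIV. c' j *\<^sub>R real_vec (p j))"
  shows "c j = c' j"
proof -
  have "(\<Sum>j\<in>UNIV. (c j - c' j) *\<^sub>R real_vec (p j)) = 0"
    using assms(2) by (simp add: scaleR_diff_left sum_subtractf)
  then have "c j - c' j = 0" by (rule lin_indep_familyD[OF assms(1)])
  then show ?thesis by simp
qed

lemma lin_indep_spans:
  assumes "lin_indep_family (p :: 'd::finite \<Rightarrow> int ^ 'd)"
  shows "\<exists>t. v = (\<Sum>j\<in>UNIV. t j *\<^sub>R real_vec (p j))"
proof -
  define f :: "real ^ 'd \<Rightarrow> real ^ 'd" where "f t = (\<Sum>j\<in>UNIV. (t $ j) *\<^sub>R real_vec (p j))" for t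
  have "linear f"
    by (rule linearI) (simp_all add: f_def scaleR_add_left sum.distrib scaleR_sum_right)
  moreover have "inj f"
  proof (rule injI)
    fix a b assume "f a = f b"
    then have "a $ j = b $ j" for j
      unfolding f_def by (rule lin_indep_coeffs_unique[OF assms])
    then show "a = b" by (simp add: vec_eq_iff)
  qed
  ultimately have "surj f" using linear_injective_imp_surjective by blast
  then obtain t where "v = f t" by (rule surjE)
  then show ?thesis unfolding f_def by blast
qed

lemma finite_Bp: "finite (Bp (p :: 'd::finite \<Rightarrow> int ^ 'd))"
proof -
  define C where "C = (\<Sum>j\<in>UNIV. \<Sum>k\<in>UNIV. \<bar>p j $ k\<bar>)"
  have "Bp p \<subseteq> {v. \<forall>k. \<bar>v $ k\<bar> \<le> C}"
  proof safe
    fix v k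
    assume "v \<in> Bp p"
    then obtain t where t: "\<And>j. 0 \<le> t j \<and> t j < 1"
      and v: "real_vec v = (\<Sum>j\<in>UNIV. t j *\<^sub>R real_vec (p j))"
      unfolding Bp_def by blast
    have "real_of_int (v $ k) = (\<Sum>j\<in>UNIV. t j * real_of_int (p j $ k))"
      using arg_cong[OF v, of "\<lambda>u. u $ k"] by (simp add: real_vec_def)
    then have "\<bar>real_of_int (v $ k)\<bar> \<le> (\<Sum>j\<in>UNIV. \<bar>t j * real_of_int (p j $ k)\<bar>)"
      by (simp add: sum_abs)
    also have "\<dots> \<le> (\<Sum>j\<in>UNIV. real_of_int (\<Sum>k\<in>UNIV. \<bar>p j $ k\<bar>))"
    proof (rule sum_mono)
      fix j
      have "\<bar>t j\<bar> * real_of_int \<bar>p j $ k\<bar> \<le> real_of_int \<bar>p j $ k\<bar>"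
        using t[of j] by (intro mult_left_le_one_le) auto
      moreover have "\<bar>p j $ k\<bar> \<le> (\<Sum>k\<in>UNIV. \<bar>p j $ k\<bar>)" by (rule member_le_sum) auto
      then have "real_of_int \<bar>p j $ k\<bar> \<le> real_of_int (\<Sum>k\<in>UNIV. \<bar>p j $ k\<bar>)"
        by (simp only: of_int_le_iff)
      ultimately show "\<bar>t j * real_of_int (p j $ k)\<bar> \<le> real_of_int (\<Sum>k\<in>UNIV. \<bar>p j $ k\<bar>)"
        unfolding abs_mult of_int_abs by linarith
    qed
    finally show "\<bar>v $ k\<bar> \<le> C" unfolding C_def of_int_sum[symmetric] by linarith
  qed
  then show ?thesis using finite_int_box finite_subset by blast
qed

text \<open>The lattice of integer combinations of the periods \<open>p\<^sub>j\<close>; \<open>Bp p\<close> is a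
  fundamental domain for it whenever the periods are independent.\<close>
definition lattice_of :: "('d::finite \<Rightarrow> int ^ 'd) \<Rightarrow> (int ^ 'd) set" where
  "lattice_of p = {v. \<exists>n. v = (\<Sum>j\<in>UNIV. n j *s p j)}"

lemma lattice_of_add:
  assumes "a \<in> lattice_of p" "b \<in> lattice_of p"
  shows "a + b \<in> lattice_of p"
proof -
  obtain n m where "a = (\<Sum>j\<in>UNIV. n j *s p j)" "b = (\<Sum>j\<in>UNIV. m j *s p j)"
    using assms unfolding lattice_of_def by blast
  then have "a + b = (\<Sum>j\<in>UNIV. (n j + m j) *s p j)"
    by (simp add: vector_sadd_rdistrib sum.distrib)
  then show ?thesis unfolding lattice_of_def mem_Collect_eq by (rule exI[of _ "\<lambda>j. n j + m j"])
qed

lemma lattice_of_uminus: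
  assumes "a \<in> lattice_of p"
  shows "- a \<in> lattice_of p"
proof -
  obtain n where "a = (\<Sum>j\<in>UNIV. n j *s p j)"
    using assms unfolding lattice_of_def by blast
  then have "- a = (\<Sum>j\<in>UNIV. (- n j) *s p j)"
    by (simp add: vec_eq_iff sum_negf)
  then show ?thesis unfolding lattice_of_def mem_Collect_eq by (rule exI[of _ "\<lambda>j. - n j"])
qed

lemma lattice_of_zero: "0 \<in> lattice_of p"
  unfolding lattice_of_def mem_Collect_eq by (rule exI[of _ "\<lambda>_. 0"]) simp

lemma lattice_of_gen: "p m \<in> lattice_of p"
proof -
  have "(\<Sum>j\<in>UNIV. (if j = m then 1 else 0) *s p j) = (\<Sum>j\<in>UNIV. if j = m then p j else 0)"
    by (rule sum.cong) auto
  also have "\<dots> = p m" by simp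
  finally show ?thesis unfolding lattice_of_def mem_Collect_eq
    by (rule exI[of _ "\<lambda>j. if j = m then 1 else 0", OF sym])
qed

lemma lattice_of_diff: "a \<in> lattice_of p \<Longrightarrow> b \<in> lattice_of p \<Longrightarrow> a - b \<in> lattice_of p"
  using lattice_of_add[OF _ lattice_of_uminus, of a p b] by simp

lemma Bp_lattice_unique:
  assumes li: "lin_indep_family p" and "a \<in> Bp p" "b \<in> Bp p" "a - b \<in> lattice_of p"
  shows "a = b"
proof -
  obtain t where t: "\<And>j. 0 \<le> t j \<and> t j < 1" and ta: "real_vec a = (\<Sum>j\<in>UNIV. t j *\<^sub>R real_vec (p j))"
    using assms(2) unfolding Bp_def by blast
  obtain s where s: "\<And>j. 0 \<le> s j \<and> s j < 1" and sb: "real_vec b = (\<Sum>j\<in>UNIV. s j *\<^sub>R real_vec (p j))"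
    using assms(3) unfolding Bp_def by blast
  obtain n where n: "a - b = (\<Sum>j\<in>UNIV. n j *s p j)"
    using assms(4) unfolding lattice_of_def by blast
  have "(\<Sum>j\<in>UNIV. (t j - s j) *\<^sub>R real_vec (p j)) = (\<Sum>j\<in>UNIV. real_of_int (n j) *\<^sub>R real_vec (p j))"
    using arg_cong[OF n, of real_vec] ta sb
    by (simp add: real_vec_diff real_vec_sum real_vec_smult scaleR_diff_left sum_subtractf)
  then have coeffs: "t j - s j = real_of_int (n j)" for j by (rule lin_indep_coeffs_unique[OF li])
  have "n j = 0" for j
  proof -
    have "-1 < real_of_int (n j)" "real_of_int (n j) < 1"
      using coeffs[of j] t[of j] s[of j] by linarith+
    then show "n j = 0" by linarith
  qed
  then show ?thesis using n by simp
qed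

text \<open>Every lattice site is congruent to a point of \<open>Bp p\<close>: take fractional parts of
  its coordinates.\<close>
lemma Bp_lattice_rep_exists:
  assumes li: "lin_indep_family p"
  shows "\<exists>w. w \<in> Bp p \<and> v - w \<in> lattice_of p"
proof -
  obtain t where t: "real_vec v = (\<Sum>j\<in>UNIV. t j *\<^sub>R real_vec (p j))"
    using lin_indep_spans[OF li] by blast
  define L where "L = (\<Sum>j\<in>UNIV. \<lfloor>t j\<rfloor> *s p j)"
  have "0 \<le> t j - real_of_int \<lfloor>t j\<rfloor> \<and> t j - real_of_int \<lfloor>t j\<rfloor> < 1" for j
    using floor_correct[of "t j"] unfolding of_int_add of_int_1 by linarith
  moreover have "real_vec (v - L) = (\<Sum>j\<in>UNIV. (t j - real_of_int \<lfloor>t j\<rfloor>) *\<^sub>R real_vec (p j))"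
    using t by (simp add: L_def real_vec_diff real_vec_sum real_vec_smult scaleR_diff_left sum_subtractf)
  ultimately have "v - L \<in> Bp p" by (rule Bp_memI)
  moreover have "v - (v - L) \<in> lattice_of p"
    unfolding L_def lattice_of_def mem_Collect_eq by (rule exI[of _ "\<lambda>j. \<lfloor>t j\<rfloor>"]) simp
  ultimately show ?thesis by blast
qed

definition lattice_rep :: "('d::finite \<Rightarrow> int ^ 'd) \<Rightarrow> int ^ 'd \<Rightarrow> int ^ 'd" where
  "lattice_rep p v = (SOME w. w \<in> Bp p \<and> v - w \<in> lattice_of p)"

lemma lattice_rep:
  assumes "lin_indep_family p"
  shows "lattice_rep p v \<in> Bp p" "v - lattice_rep p v \<in> lattice_of p"
  using someI_ex[OF Bp_lattice_rep_exists[OF assms, of v]] unfolding lattice_rep_def by blast+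

lemma lattice_rep_eq:
  assumes li: "lin_indep_family p" and "w \<in> Bp p" "v - w \<in> lattice_of p"
  shows "lattice_rep p v = w"
proof -
  have "lattice_rep p v - w = (v - w) - (v - lattice_rep p v)" by simp
  then have "lattice_rep p v - w \<in> lattice_of p"
    using lattice_of_diff[OF assms(3) lattice_rep(2)[OF li, of v]] by simp
  then show ?thesis using Bp_lattice_unique[OF li lattice_rep(1)[OF li] assms(2)] by blast
qed

lemma bij_betw_Bp_translate:
  fixes p :: "'d::finite \<Rightarrow> int ^ 'd" and k :: "int ^ 'd"
  assumes li: "lin_indep_family p"
  defines "\<phi> \<equiv> \<lambda>j. k + lattice_rep p (j - k)"
  shows "bij_betw \<phi> (Bp p) ((+) k ` Bp p)" and "\<phi> j - j \<in> lattice_of p"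
proof -
  have lat: "\<phi> j - j \<in> lattice_of p" for j
  proof -
    have "\<phi> j - j = - ((j - k) - lattice_rep p (j - k))" by (simp add: \<phi>_def)
    then show ?thesis using lattice_of_uminus[OF lattice_rep(2)[OF li, of "j - k"]] by (simp only:)
  qed
  then show "\<phi> j - j \<in> lattice_of p" .
  show "bij_betw \<phi> (Bp p) ((+) k ` Bp p)"
  proof (rule bij_betw_imageI)
    show "inj_on \<phi> (Bp p)"
    proof (rule inj_onI)
      fix a b assume ab: "a \<in> Bp p" "b \<in> Bp p" and "\<phi> a = \<phi> b"
      then have "a - b = (\<phi> b - b) - (\<phi> a - a)" by simp
      then have "a - b \<in> lattice_of p" using lattice_of_diff[OF lat[of b] lat[of a]] by simp
      then show "a = b" by (rule Bp_lattice_unique[OF li ab])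
    qed
    show "\<phi> ` Bp p = (+) k ` Bp p"
    proof
      show "\<phi> ` Bp p \<subseteq> (+) k ` Bp p"
      proof (rule image_subsetI)
        fix j
        show "\<phi> j \<in> (+) k ` Bp p"
          unfolding \<phi>_def by (rule imageI) (rule lattice_rep(1)[OF li])
      qed
      show "(+) k ` Bp p \<subseteq> \<phi> ` Bp p"
      proof
        fix d assume "d \<in> (+) k ` Bp p"
        then obtain w where w: "w \<in> Bp p" and d: "d = k + w" by auto
        define j where "j = lattice_rep p d"
        have "(j - k) - w = - (d - lattice_rep p d)" by (simp add: j_def d)
        then have "(j - k) - w \<in> lattice_of p"
          using lattice_of_uminus[OF lattice_rep(2)[OF li]] by simp
        then have "lattice_rep p (j - k) = w" by (rule lattice_rep_eq[OF li w])
        then have "d = \<phi> j" by (simp add: \<phi>_def d)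
        moreover have "j \<in> Bp p" unfolding j_def by (rule lattice_rep(1)[OF li])
        ultimately show "d \<in> \<phi> ` Bp p" by (rule image_eqI)
      qed
    qed
  qed
qed

lemma sum_periodic_translate_Bp:
  assumes li: "lin_indep_family p" and per: "\<And>j L. L \<in> lattice_of p \<Longrightarrow> h (j + L) = h j"
  shows "(\<Sum>j\<in>Bp p. h j) = (\<Sum>j\<in>(+) k ` Bp p. h j)"
proof -
  define \<phi> where "\<phi> j = k + lattice_rep p (j - k)" for j
  have "h (\<phi> j) = h j" for j
    using per[OF bij_betw_Bp_translate(2)[OF li, of k j], of j] by (simp add: \<phi>_def)
  then have "(\<Sum>j\<in>Bp p. h j) = (\<Sum>j\<in>Bp p. h (\<phi> j))" by simp
  also have "\<dots> = (\<Sum>j\<in>(+) k ` Bp p. h j)"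
    unfolding \<phi>_def by (rule sum.reindex_bij_betw[OF bij_betw_Bp_translate(1)[OF li]])
  finally show ?thesis .
qed

lemma tau_tau: "tau k l (tau k' l' z) = tau (k + k') (l + l') z"
  by (simp add: tau_def fun_eq_iff algebra_simps)

lemma tau_zero: "tau 0 0 z = z"
  by (simp add: tau_def)

lemma tau_inf: "tau k l (inf a b) = inf (tau k l a) (tau k l b)"
  and tau_sup: "tau k l (sup a b) = sup (tau k l a) (tau k l b)"
  by (auto simp: tau_def fun_eq_iff inf_min sup_max min_add_distrib_left max_add_distrib_left)

lemma tau_int_power_fixed:
  assumes "tau k l z = z"
  shows "tau (c *s k) (c * l) z = z"
proof -
  have nat_power: "tau (int n *s k) (int n * l) z = z" for n
  proof (induction n)
    case 0
    then show ?case by (simp add: tau_zero)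
  next
    case (Suc n)
    have "tau (int (Suc n) *s k) (int (Suc n) * l) z = tau k l (tau (int n *s k) (int n * l) z)"
      by (simp add: tau_tau vec_eq_iff algebra_simps)
    then show ?case using Suc assms by simp
  qed
  show ?thesis
  proof (cases "c \<ge> 0")
    case True
    then show ?thesis using nat_power[of "nat c"] by simp
  next
    case False
    have "tau (c *s k) (c * l) z = tau (c *s k) (c * l) (tau (- c *s k) (- c * l) z)"
      using nat_power[of "nat (- c)"] False by simp
    also have "\<dots> = z"
      unfolding tau_tau vector_sadd_rdistrib[symmetric] by (simp add: tau_zero)
    finally show ?thesis .
  qed
qed

lemma Xpq_lattice_invariant:
  assumes "z \<in> Xpq p q" and "L \<in> lattice_of p"
  shows "\<exists>l. tau L l z = z"
proof -
  obtain n where L: "L = (\<Sum>j\<in>UNIV. n j *s p j)"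
    using assms(2) unfolding lattice_of_def by blast
  have "tau (\<Sum>j\<in>A. n j *s p j) (\<Sum>j\<in>A. n j * q j) z = z" for A
  proof (induction A rule: infinite_finite_induct)
    case (insert a A)
    have "tau (n a *s p a) (n a * q a) z = z"
      using assms(1) by (intro tau_int_power_fixed) (simp add: Xpq_def)
    with insert show ?case by (simp add: tau_tau[symmetric])
  qed (simp_all add: tau_zero)
  then show ?thesis unfolding L by blast
qed

lemma local_potentials_lattice_periodic:
  assumes LP: "local_potentials S r" and "z \<in> Xpq p q" and "L \<in> lattice_of p"
  shows "S (j + L) z = S j z"
proof -
  obtain l where "tau L l z = z" using Xpq_lattice_invariant[OF assms(2,3)] by blast
  then show ?thesis using local_potentials_shift[OF LP, of j L l z] by simp
qed

text \<open>The periodic extension of a perturbation \<open>y\<close> from the fundamental domain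
  translated by \<open>k\<close>: it repeats the values of \<open>y\<close> on \<open>k + Bp p\<close>.\<close>
definition periodize :: "('d::finite \<Rightarrow> int ^ 'd) \<Rightarrow> int ^ 'd \<Rightarrow> 'd config \<Rightarrow> 'd config" where
  "periodize p k y i = y (k + lattice_rep p (i - k))"

lemma periodize_lattice_periodic:
  assumes li: "lin_indep_family p" and "L \<in> lattice_of p"
  shows "periodize p k y (i + L) = periodize p k y i"
proof -
  have eq: "(i + L - k) - lattice_rep p (i - k) = L + ((i - k) - lattice_rep p (i - k))"
    by (simp add: algebra_simps)
  have "(i + L - k) - lattice_rep p (i - k) \<in> lattice_of p"
    unfolding eq by (rule lattice_of_add[OF assms(2) lattice_rep(2)[OF li]])
  then have "lattice_rep p (i + L - k) = lattice_rep p (i - k)"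
    by (rule lattice_rep_eq[OF li lattice_rep(1)[OF li]])
  then show ?thesis by (simp add: periodize_def add_diff_eq)
qed

lemma periodize_on_domain:
  assumes li: "lin_indep_family p" and "i - k \<in> Bp p"
  shows "periodize p k y i = y i"
proof -
  have "(i - k) - (i - k) \<in> lattice_of p" using lattice_of_zero by simp
  then have "lattice_rep p (i - k) = i - k" by (rule lattice_rep_eq[OF li assms(2)])
  then show ?thesis by (simp add: periodize_def)
qed

lemma Xpq_add_periodic:
  assumes "x \<in> Xpq p q" and "\<And>m i. Y (i + p m) = Y i"
  shows "(\<lambda>i. x i + Y i) \<in> Xpq p q"
  using assms unfolding Xpq_def tau_def by (simp add: fun_eq_iff algebra_simps)

text \<open>If \<open>y\<close> is supported in the \<open>r\<close>-interior of \<open>B \<subseteq> k + Bp p\<close>, its periodic extension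
  agrees with \<open>y\<close> on every \<open>r\<close>-ball centred in \<open>k + Bp p\<close>: otherwise a lattice translate
  of the centre would lie in \<open>B\<close>, giving two congruent points of \<open>Bp p\<close>.\<close>
lemma periodize_agrees_near_domain:
  assumes li: "lin_indep_family p" and Bk: "\<And>i. i \<in> B \<Longrightarrow> i - k \<in> Bp p"
    and supp: "\<And>i. y i \<noteq> 0 \<Longrightarrow> i \<in> interiorB B r"
    and j: "j - k \<in> Bp p" and i: "i \<in> ballZ j r"
  shows "periodize p k y i = y i"
proof (cases "y i = 0")
  case False
  then have "i \<in> B" using supp by (simp add: interiorB_def)
  then show ?thesis by (rule periodize_on_domain[OF li Bk])
next
  case True
  define s where "s = k + lattice_rep p (i - k)"
  show ?thesis
  proof (rule ccontr)
    assume "periodize p k y i \<noteq> y i"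
    then have "y s \<noteq> 0" using True by (simp add: periodize_def s_def)
    then have ball_s: "ballZ s r \<subseteq> B" using supp by (simp add: interiorB_def)
    define L where "L = i - s"
    have L: "L \<in> lattice_of p" using lattice_rep(2)[OF li, of "i - k"] by (simp add: L_def s_def diff_diff_eq)
    have "norm1 ((j - L) - s) = norm1 (i - j)"
      using norm1_minus_commute[of j i] by (simp add: L_def)
    then have "j - L \<in> ballZ s r" using i by (simp add: ballZ_def)
    then have "(j - L) - k \<in> Bp p" using ball_s Bk by blast
    moreover have "(j - k) - ((j - L) - k) = L" by simp
    ultimately have "j - k = (j - L) - k"
      using Bp_lattice_unique[OF li j] L by metis
    then have "i = s" by (simp add: L_def)
    then show False using \<open>y s \<noteq> 0\<close> True by simp
  qed
qed

lemma local_potential_unperturbed: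
  assumes LP: "local_potentials S r" and supp: "\<And>i. y i \<noteq> 0 \<Longrightarrow> i \<in> interiorB B r"
    and "j \<notin> B"
  shows "S j (\<lambda>i. x i + y i) = S j x"
proof (rule local_potentials_local[OF LP])
  fix i assume "i \<in> ballZ j r"
  then have "j \<in> ballZ i r" using norm1_minus_commute[of i j] by (simp add: ballZ_def)
  then have "y i = 0" using supp \<open>j \<notin> B\<close> by (auto simp: interiorB_def)
  then show "x i + y i = x i" by simp
qed

lemma periodic_extension_energy:
  assumes LP: "local_potentials S r" and li: "lin_indep_family p" and xX: "x \<in> Xpq p q"
    and Bk: "\<And>i. i \<in> B \<Longrightarrow> i - k \<in> Bp p"
    and supp: "\<And>i. y i \<noteq> 0 \<Longrightarrow> i \<in> interiorB B r"
  shows "\<exists>z\<in>Xpq p q. Wpq S p z - Wpq S p x = WB S B (\<lambda>i. x i + y i) - WB S B x"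
proof
  define z where "z i = x i + periodize p k y i" for i
  show zX: "z \<in> Xpq p q"
    unfolding z_def using xX periodize_lattice_periodic[OF li lattice_of_gen]
    by (rule Xpq_add_periodic)
  define h where "h j = S j z - S j x" for j
  have h_periodic: "h (j + L) = h j" if "L \<in> lattice_of p" for j L
    unfolding h_def using local_potentials_lattice_periodic[OF LP _ that] zX xX by simp
  have "Wpq S p z - Wpq S p x = (\<Sum>j\<in>Bp p. h j)"
    unfolding Wpq_def WB_def h_def by (simp add: sum_subtractf)
  also have "\<dots> = (\<Sum>j\<in>(+) k ` Bp p. h j)"
    by (rule sum_periodic_translate_Bp[OF li h_periodic])
  also have "\<dots> = (\<Sum>j\<in>(+) k ` Bp p. S j (\<lambda>i. x i + y i) - S j x)"
  proof (rule sum.cong)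
    fix j assume "j \<in> (+) k ` Bp p"
    then have "j - k \<in> Bp p" by auto
    then have "S j z = S j (\<lambda>i. x i + y i)"
      using periodize_agrees_near_domain[OF li Bk supp]
      by (intro local_potentials_local[OF LP]) (simp add: z_def)
    then show "h j = S j (\<lambda>i. x i + y i) - S j x" by (simp add: h_def)
  qed simp
  also have "\<dots> = (\<Sum>j\<in>B. S j (\<lambda>i. x i + y i) - S j x)"
  proof (rule sum.mono_neutral_right)
    show "B \<subseteq> (+) k ` Bp p"
    proof
      fix i assume "i \<in> B"
      then have "k + (i - k) \<in> (+) k ` Bp p" using Bk by blast
      then show "i \<in> (+) k ` Bp p" by simp
    qed
  qed (use finite_Bp local_potential_unperturbed[OF LP supp] in auto)
  also have "\<dots> = WB S B (\<lambda>i. x i + y i) - WB S B x"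
    unfolding WB_def by (simp add: sum_subtractf)
  finally show "Wpq S p z - Wpq S p x = WB S B (\<lambda>i. x i + y i) - WB S B x" .
qed

definition double_at :: "('a \<Rightarrow> 'b::plus) \<Rightarrow> 'a \<Rightarrow> 'a \<Rightarrow> 'b" where
  "double_at f m = f(m := f m + f m)"

lemma sum_double_at:
  "(\<Sum>j\<in>UNIV. t j *\<^sub>R real_vec (double_at p m j))
     = (\<Sum>j\<in>UNIV. (if j = m then 2 * t j else t j) *\<^sub>R real_vec (p j))"
proof (rule sum.cong)
  fix j
  have "t m *\<^sub>R real_vec (p m + p m) = (2 * t m) *\<^sub>R real_vec (p m)"
    unfolding real_vec_add mult_2 scaleR_add_left scaleR_add_right ..
  then show "t j *\<^sub>R real_vec (double_at p m j) = (if j = m then 2 * t j else t j) *\<^sub>R real_vec (p j)"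
    by (simp add: double_at_def)
qed simp

lemma lin_indep_double_at:
  assumes "lin_indep_family p"
  shows "lin_indep_family (double_at p m)"
  unfolding lin_indep_family_def
proof (intro allI impI)
  fix c j
  assume "(\<Sum>j\<in>UNIV. c j *\<^sub>R real_vec (double_at p m j)) = 0"
  then have "(\<Sum>j\<in>UNIV. (if j = m then 2 * c j else c j) *\<^sub>R real_vec (p j)) = 0"
    by (simp add: sum_double_at)
  then have "(if j = m then 2 * c j else c j) = 0"
    by (rule lin_indep_familyD[OF assms])
  then show "c j = 0" by (simp split: if_splits)
qed

lemma sum_upd_add:
  fixes u :: "'a::finite \<Rightarrow> 'b::real_vector"
  shows "(\<Sum>j\<in>UNIV. (if j = m then c j + d else c j) *\<^sub>R u j) = (\<Sum>j\<in>UNIV. c j *\<^sub>R u j) + d *\<^sub>R u m"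
proof -
  have "(\<Sum>j\<in>UNIV. (if j = m then c j + d else c j) *\<^sub>R u j)
      = (\<Sum>j\<in>UNIV. c j *\<^sub>R u j + (if j = m then d *\<^sub>R u j else 0))"
    by (rule sum.cong) (auto simp: scaleR_add_left)
  then show ?thesis by (simp add: sum.distrib)
qed

lemma Bp_double_at: "Bp (double_at p m) = Bp p \<union> (+) (p m) ` Bp p"
proof (intro equalityI subsetI)
  fix i assume "i \<in> Bp (double_at p m)"
  then obtain t where t: "\<And>j. 0 \<le> t j \<and> t j < 1"
    and "real_vec i = (\<Sum>j\<in>UNIV. t j *\<^sub>R real_vec (double_at p m j))"
    unfolding Bp_def by blast
  then have i: "real_vec i = (\<Sum>j\<in>UNIV. (if j = m then 2 * t j else t j) *\<^sub>R real_vec (p j))"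
    by (simp add: sum_double_at)
  show "i \<in> Bp p \<union> (+) (p m) ` Bp p"
  proof (cases "t m < 1/2")
    case True
    then have "\<forall>j. 0 \<le> (if j = m then 2 * t j else t j) \<and> (if j = m then 2 * t j else t j) < 1"
      using t by auto
    then show ?thesis using Bp_memI[OF _ i] by blast
  next
    case False
    define t' where "t' j = (if j = m then 2 * t j - 1 else t j)" for j
    have "real_vec i = (\<Sum>j\<in>UNIV. (if j = m then t' j + 1 else t' j) *\<^sub>R real_vec (p j))"
      unfolding i by (rule sum.cong) (auto simp: t'_def)
    then have "real_vec (i - p m) = (\<Sum>j\<in>UNIV. t' j *\<^sub>R real_vec (p j))"
      by (simp add: sum_upd_add real_vec_diff)
    moreover have "\<forall>j. 0 \<le> t' j \<and> t' j < 1" using t False by (auto simp: t'_def)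
    ultimately have "i - p m \<in> Bp p" by (intro Bp_memI) auto
    then have "p m + (i - p m) \<in> (+) (p m) ` Bp p" by (rule imageI)
    then show ?thesis by simp
  qed
next
  have lift: "\<delta> *s p m + i \<in> Bp (double_at p m)" if "i \<in> Bp p" and "\<delta> \<in> {0, 1}" for i \<delta>
  proof -
    obtain s where s: "\<And>j. 0 \<le> s j \<and> s j < 1"
      and i: "real_vec i = (\<Sum>j\<in>UNIV. s j *\<^sub>R real_vec (p j))"
      using \<open>i \<in> Bp p\<close> unfolding Bp_def by blast
    define t where "t j = (if j = m then (s j + real_of_int \<delta>) / 2 else s j)" for j
    have "(\<Sum>j\<in>UNIV. t j *\<^sub>R real_vec (double_at p m j))
        = (\<Sum>j\<in>UNIV. (if j = m then s j + real_of_int \<delta> else s j) *\<^sub>R real_vec (p j))"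
      unfolding sum_double_at by (rule sum.cong) (auto simp: t_def)
    also have "\<dots> = real_vec (\<delta> *s p m + i)"
      by (simp add: sum_upd_add i real_vec_add real_vec_smult)
    finally have "real_vec (\<delta> *s p m + i) = (\<Sum>j\<in>UNIV. t j *\<^sub>R real_vec (double_at p m j))" ..
    moreover have "0 \<le> t j \<and> t j < 1" for j using s[of j] \<open>\<delta> \<in> {0, 1}\<close> by (auto simp: t_def)
    ultimately show ?thesis by (intro Bp_memI) auto
  qed
  fix i assume "i \<in> Bp p \<union> (+) (p m) ` Bp p"
  then show "i \<in> Bp (double_at p m)" using lift[of _ 0] lift[of _ 1] by auto
qed

text \<open>The two copies are disjoint, since \<open>p m\<close> is a nonzero lattice vector.\<close>
lemma Bp_double_at_disjoint:
  assumes li: "lin_indep_family p"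
  shows "Bp p \<inter> (+) (p m) ` Bp p = {}"
proof (rule ccontr)
  assume "Bp p \<inter> (+) (p m) ` Bp p \<noteq> {}"
  then obtain w where w: "w \<in> Bp p" "p m + w \<in> Bp p" by auto
  have "(p m + w) - w \<in> lattice_of p" using lattice_of_gen[of p m] by simp
  then have "p m = 0" using Bp_lattice_unique[OF li w(2) w(1)] by simp
  then have "(\<Sum>j\<in>UNIV. (if j = m then 1 else 0) *\<^sub>R real_vec (p j)) = 0"
    by (intro sum.neutral) (simp add: real_vec_def vec_eq_iff)
  then have "(if m = m then 1 else 0 :: real) = 0" by (rule lin_indep_familyD[OF li])
  then show False by simp
qed

lemma sum_Bp_double_at:
  assumes li: "lin_indep_family p"
  shows "(\<Sum>j\<in>Bp (double_at p m). g j) = (\<Sum>j\<in>Bp p. g j) + (\<Sum>j\<in>Bp p. g (p m + j))"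
proof -
  have "(\<Sum>j\<in>Bp (double_at p m). g j) = (\<Sum>j\<in>Bp p. g j) + (\<Sum>j\<in>(+) (p m) ` Bp p. g j)"
    unfolding Bp_double_at
    by (rule sum.union_disjoint) (use finite_Bp Bp_double_at_disjoint[OF li] in auto)
  also have "(\<Sum>j\<in>(+) (p m) ` Bp p. g j) = (\<Sum>j\<in>Bp p. g (p m + j))"
    by (rule sum.reindex_cong[where l="(+) (p m)"]) auto
  finally show ?thesis .
qed

lemma Xpq_double_at:
  assumes "x \<in> Xpq p q"
  shows "x \<in> Xpq (double_at p m) (double_at q m)"
proof -
  have "tau (p m + p m) (q m + q m) x = tau (p m) (q m) (tau (p m) (q m) x)"
    by (simp add: tau_tau)
  then show ?thesis using assms unfolding Xpq_def double_at_def by auto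
qed

lemma Wpq_double_at_periodic:
  assumes LP: "local_potentials S r" and li: "lin_indep_family p" and zX: "z \<in> Xpq p q"
  shows "Wpq S (double_at p m) z = 2 * Wpq S p z"
proof -
  have "S (p m + j) z = S j z" for j
    using local_potentials_lattice_periodic[OF LP zX lattice_of_gen, of j m] by (simp add: add.commute)
  then show ?thesis unfolding Wpq_def WB_def sum_Bp_double_at[OF li] by simp
qed

lemma Wpq_double_at_shift:
  assumes LP: "local_potentials S r" and li: "lin_indep_family p"
    and zX: "z \<in> Xpq (double_at p m) (double_at q m)"
  shows "Wpq S (double_at p m) (tau (p m) (q m) z) = Wpq S (double_at p m) z"
proof -
  have per2: "S (j + (p m + p m)) z = S j z" for j
    using local_potentials_lattice_periodic[OF LP zX lattice_of_gen, of j m]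
    by (simp add: double_at_def)
  have "Wpq S (double_at p m) (tau (p m) (q m) z) = (\<Sum>j\<in>Bp (double_at p m). S (j + p m) z)"
    unfolding Wpq_def WB_def local_potentials_shift[OF LP] ..
  also have "\<dots> = (\<Sum>j\<in>Bp p. S (j + p m) z) + (\<Sum>j\<in>Bp p. S (p m + j + p m) z)"
    by (rule sum_Bp_double_at[OF li])
  also have "(\<Sum>j\<in>Bp p. S (p m + j + p m) z) = (\<Sum>j\<in>Bp p. S j z)"
    using per2 by (simp add: add.commute add.left_commute)
  finally show ?thesis
    unfolding Wpq_def WB_def sum_Bp_double_at[OF li] by (simp add: add.commute)
qed

lemma Xpq_inf_sup_shift:
  assumes zX: "z \<in> Xpq (double_at p m) (double_at q m)"
  defines "T \<equiv> tau (p m) (q m)"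
  shows "inf z (T z) \<in> Xpq p q" and "sup z (T z) \<in> Xpq p q"
proof -
  have invariant: "tau (p j) (q j) (inf z (T z)) = inf z (T z) \<and> tau (p j) (q j) (sup z (T z)) = sup z (T z)" for j
  proof (cases "j = m")
    case True
    have "tau (double_at p m m) (double_at q m m) z = z"
      using zX unfolding Xpq_def by blast
    then have "T (T z) = z" unfolding T_def tau_tau by (simp add: double_at_def)
    then show ?thesis
      using True by (simp add: T_def tau_inf tau_sup inf_commute sup_commute)
  next
    case False
    have comm: "tau (p j) (q j) (T z) = T (tau (p j) (q j) z)"
      by (simp add: T_def tau_tau add.commute)
    have "tau (double_at p m j) (double_at q m j) z = z"
      using zX unfolding Xpq_def by blast
    then have "tau (p j) (q j) z = z" using False by (simp add: double_at_def)
    then show ?thesis by (simp add: tau_inf tau_sup comm)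
  qed
  show "inf z (T z) \<in> Xpq p q" "sup z (T z) \<in> Xpq p q"
    using invariant unfolding Xpq_def by auto
qed

definition periodic_minimizer ::
  "(int ^ 'd::finite \<Rightarrow> 'd config \<Rightarrow> real) \<Rightarrow> ('d \<Rightarrow> int ^ 'd) \<Rightarrow> ('d \<Rightarrow> int) \<Rightarrow> 'd config \<Rightarrow> bool" where
  "periodic_minimizer S p q x \<longleftrightarrow>
     lin_indep_family p \<and> x \<in> Xpq p q \<and> (\<forall>z\<in>Xpq p q. Wpq S p x \<le> Wpq S p z)"

text \<open>For a competitor \<open>z\<close> with doubled periods, submodularity applied to \<open>z\<close> and
  its translate produces two \<open>p\<close>-periodic configurations whose energies bound that of \<open>z\<close>.\<close>
lemma periodic_minimizer_double_at:
  assumes LP: "local_potentials S r" and min: "periodic_minimizer S p q x"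
  shows "periodic_minimizer S (double_at p m) (double_at q m) x"
proof -
  have li: "lin_indep_family p" and xX: "x \<in> Xpq p q" and xmin: "\<And>z. z \<in> Xpq p q \<Longrightarrow> Wpq S p x \<le> Wpq S p z"
    using min unfolding periodic_minimizer_def by auto
  define T where "T = tau (p m) (q m)"
  have "Wpq S (double_at p m) x \<le> Wpq S (double_at p m) z"
    if zX: "z \<in> Xpq (double_at p m) (double_at q m)" for z
  proof -
    have lo: "inf z (T z) \<in> Xpq p q" and hi: "sup z (T z) \<in> Xpq p q"
      using Xpq_inf_sup_shift[OF zX] unfolding T_def by auto
    have "2 * Wpq S p (inf z (T z)) + 2 * Wpq S p (sup z (T z))
          = Wpq S (double_at p m) (inf z (T z)) + Wpq S (double_at p m) (sup z (T z))"
      by (simp add: Wpq_double_at_periodic[OF LP li lo] Wpq_double_at_periodic[OF LP li hi])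
    also have "\<dots> \<le> Wpq S (double_at p m) z + Wpq S (double_at p m) (T z)"
      unfolding Wpq_def by (rule WB_submodular[OF LP])
    also have "Wpq S (double_at p m) (T z) = Wpq S (double_at p m) z"
      unfolding T_def by (rule Wpq_double_at_shift[OF LP li zX])
    finally show ?thesis
      using xmin[OF lo] xmin[OF hi] Wpq_double_at_periodic[OF LP li xX, of m] by linarith
  qed
  then show ?thesis
    unfolding periodic_minimizer_def using lin_indep_double_at[OF li] Xpq_double_at[OF xX] by simp
qed

lemma periodic_minimizer_double_set:
  assumes LP: "local_potentials S r" and min: "periodic_minimizer S p q x" and "finite A"
  shows "periodic_minimizer S (\<lambda>j. if j \<in> A then p j + p j else p j)
                                (\<lambda>j. if j \<in> A then q j + q j else q j) x"
  using \<open>finite A\<close>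
proof (induction A rule: finite_induct)
  case empty
  then show ?case using min by simp
next
  case (insert a A)
  have "double_at (\<lambda>j. if j \<in> A then p j + p j else p j) a = (\<lambda>j. if j \<in> insert a A then p j + p j else p j)"
    and "double_at (\<lambda>j. if j \<in> A then q j + q j else q j) a = (\<lambda>j. if j \<in> insert a A then q j + q j else q j)"
    using insert.hyps(2) by (auto simp: double_at_def fun_eq_iff)
  then show ?case using periodic_minimizer_double_at[OF LP insert.IH, of a] by simp
qed

lemma periodic_minimizer_scale_pow2:
  assumes LP: "local_potentials S r" and min: "periodic_minimizer S p q x"
  shows "periodic_minimizer S (\<lambda>j. 2 ^ n *s p j) (\<lambda>j. 2 ^ n * q j) x"
proof (induction n)
  case 0
  then show ?case using min by simp
next
  case (Suc n)
  have "(\<lambda>j. if j \<in> UNIV then 2 ^ n *s p j + 2 ^ n *s p j else 2 ^ n *s p j) = (\<lambda>j. 2 ^ Suc n *s p j)"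
    and "(\<lambda>j. if j \<in> UNIV then 2 ^ n * q j + 2 ^ n * q j else 2 ^ n * q j) = (\<lambda>j. 2 ^ Suc n * q j)"
    by (simp_all add: fun_eq_iff vec_eq_iff)
  then show ?case using periodic_minimizer_double_set[OF LP Suc, of UNIV] by simp
qed

lemma Bp_scaled_translate:
  assumes v: "real_vec v = (\<Sum>j\<in>UNIV. t j *\<^sub>R real_vec (p j))"
    and t: "\<And>j. \<bar>t j\<bar> \<le> real_of_int M" and N: "2 * M < N"
  shows "v - (\<Sum>j\<in>UNIV. (- M) *s p j) \<in> Bp (\<lambda>j. N *s p j)"
proof (rule Bp_memI)
  define c where "c j = (t j + real_of_int M) / real_of_int N" for j
  have N_pos: "real_of_int N > 0" using t[of undefined] N by linarith
  show "real_vec (v - (\<Sum>j\<in>UNIV. (- M) *s p j)) = (\<Sum>j\<in>UNIV. c j *\<^sub>R real_vec (N *s p j))"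
    using v N_pos
    by (simp add: c_def real_vec_diff real_vec_sum real_vec_smult scaleR_add_left sum.distrib
        sum_negf)
  show "0 \<le> c j \<and> c j < 1" for j
    using t[of j] N N_pos unfolding c_def by (auto simp: divide_simps abs_le_iff)
qed

lemma finite_set_in_scaled_Bp:
  assumes li: "lin_indep_family p" and "finite B"
  shows "\<exists>n k. \<forall>i\<in>B. i - k \<in> Bp (\<lambda>j. 2 ^ n *s p j)"
proof -
  have "\<forall>v. \<exists>t. real_vec v = (\<Sum>j\<in>UNIV. t j *\<^sub>R real_vec (p j))"
    using lin_indep_spans[OF li] by blast
  from choice[OF this] obtain T where T: "\<forall>v. real_vec v = (\<Sum>j\<in>UNIV. T v j *\<^sub>R real_vec (p j))"
    by blast
  define M where "M = \<lceil>\<Sum>i\<in>B. \<Sum>j\<in>UNIV. \<bar>T i j\<bar>\<rceil>"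
  have TM: "\<bar>T i j\<bar> \<le> real_of_int M" if "i \<in> B" for i j
  proof -
    have "\<bar>T i j\<bar> \<le> (\<Sum>j\<in>UNIV. \<bar>T i j\<bar>)" by (rule member_le_sum) auto
    also have "\<dots> \<le> (\<Sum>i\<in>B. \<Sum>j\<in>UNIV. \<bar>T i j\<bar>)"
      by (rule member_le_sum[where f="\<lambda>i. \<Sum>j\<in>UNIV. \<bar>T i j\<bar>"]) (use that \<open>finite B\<close> in auto)
    also have "\<dots> \<le> real_of_int M" unfolding M_def by (rule le_of_int_ceiling)
    finally show ?thesis .
  qed
  define n where "n = nat (2 * M + 1)"
  have "int n < 2 ^ n" using less_exp[of n] by (metis of_nat_less_iff of_nat_numeral of_nat_power)
  then have "2 * M < 2 ^ n" unfolding n_def by linarith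
  then have "i - (\<Sum>j\<in>UNIV. (- M) *s p j) \<in> Bp (\<lambda>j. 2 ^ n *s p j)" if "i \<in> B" for i
    using Bp_scaled_translate[OF spec[OF T, of i] TM[OF that]] \<open>2 * M < 2 ^ n\<close> by blast
  then show ?thesis by blast
qed

theorem mainTheorem5:
  fixes S :: "int ^ 'd::finite \<Rightarrow> (int ^ 'd \<Rightarrow> real) \<Rightarrow> real"
    and r :: real
    and p :: "'d \<Rightarrow> int ^ 'd"
    and q :: "'d \<Rightarrow> int"
    and x :: "int ^ 'd \<Rightarrow> real"
  assumes "local_potentials S r"
    and "lin_indep_family p"
    and "x \<in> Xpq p q"
    and "\<forall>y\<in>Xpq p q. Wpq S p x \<le> Wpq S p y"
  shows "global_minimizer S r x"
  unfolding global_minimizer_def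
proof (intro allI impI)
  fix B :: "(int ^ 'd) set" and y :: "int ^ 'd \<Rightarrow> real"
  assume "finite B" and supp: "\<forall>i. y i \<noteq> 0 \<longrightarrow> i \<in> interiorB B r"
  obtain n k where Bk: "\<forall>i\<in>B. i - k \<in> Bp (\<lambda>j. 2 ^ n *s p j)"
    using finite_set_in_scaled_Bp[OF assms(2) \<open>finite B\<close>] by blast
  define P where "P = (\<lambda>j. 2 ^ n *s p j)"
  define Q where "Q = (\<lambda>j. 2 ^ n * q j)"
  have "periodic_minimizer S p q x"
    using assms unfolding periodic_minimizer_def by blast
  then have "periodic_minimizer S P Q x"
    unfolding P_def Q_def by (rule periodic_minimizer_scale_pow2[OF assms(1)])
  then have li: "lin_indep_family P" and xX: "x \<in> Xpq P Q"
    and xmin: "\<forall>z\<in>Xpq P Q. Wpq S P x \<le> Wpq S P z"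
    unfolding periodic_minimizer_def by blast+
  obtain z where "z \<in> Xpq P Q" and "Wpq S P z - Wpq S P x = WB S B (\<lambda>i. x i + y i) - WB S B x"
    using periodic_extension_energy[OF assms(1) li xX] Bk supp unfolding P_def by blast
  then show "WB S B x \<le> WB S B (\<lambda>i. x i + y i)" using xmin by fastforce
qed
end
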